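(* Let $\mu$ be a probability measure on $\mathbb{R}$, absolutely continuous with density $f$, whose support is not included in $(-\infty,0)$. Assume there is a complex valued function $k$ on $\mathbb{R}$ such that $f(t)=\int_{\mathbb{R}}e^{iut}k(u)\,du$ for all $t\ge0$, and that 1. the absolute moments $M_n=\int_{\mathbb{R}}|u|^n|k(u)|\,du$, $n\ge0$, are finite and $\limsup_n M_n/n!<\infty$; 2. $k$ does not vanish on any interval of $\mathbb{R}$. Then $f$ is bounded on $[0,\infty)$, and for every $g\in L^1([0,\infty))$, if $\int_0^\infty f(t+s)g(s)\,ds=0$ for all $t\ge0$ then $g=0$ almost everywhere. In particular, $\mu$ is characterized by the restrictions of $\mu$ and $\mu*\mu$ to $[0,\infty)$ (any probability measure $\mu_1$ on $\mathbb{R}$ with $\mu_1=\mu$ and $\mu_1*\mu_1=\mu*\mu$ on $[0,\infty)$ equals $\mu$), and $\mu\in\mathscr{C}$. Moreover the restriction of $f$ to $[0,\infty)$ admits an analytic continuation on $\mathbb{R}$ (namely $t\mapsto\int_{\mathbb{R}}e^{iut}k(u)\,du$ is real-analytic on $\mathbb{R}$).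
   Context: $\mathscr{C}$ is the set of probability measures $\mu$ on $\mathbb{R}$ such that every probability measure $\mu_1$ with $\mu_1^{*n}=\mu^{*n}$ on $[0,\infty)$ for all $n\ge1$ ($*n$ = $n$-fold convolution power) equals $\mu$. *)

theory Defs
  imports "HOL-Probability.Probability"
begin

fun conv_pow :: "real measure \<Rightarrow> nat \<Rightarrow> real measure" where
  "conv_pow M 0 = return borel 0"
| "conv_pow M (Suc n) = (if n = 0 then M else M \<star> conv_pow M n)"

definition agree_on_nonneg :: "real measure \<Rightarrow> real measure \<Rightarrow> bool" where
  "agree_on_nonneg M N \<longleftrightarrow> (\<forall>A \<in> sets borel. A \<subseteq> {0..} \<longrightarrow> emeasure M A = emeasure N A)"

definition real_prob :: "real measure \<Rightarrow> bool" where
  "real_prob M \<longleftrightarrow> prob_space M \<and> sets M = sets borel"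

definition class_C :: "real measure set" where
  "class_C = {\<mu>. real_prob \<mu> \<and>
     (\<forall>\<mu>1. real_prob \<mu>1 \<and> (\<forall>n\<ge>1. agree_on_nonneg (conv_pow \<mu>1 n) (conv_pow \<mu> n)) \<longrightarrow> \<mu>1 = \<mu>)}"

definition msupport :: "real measure \<Rightarrow> real set" where
  "msupport M = {x. \<forall>e>0. emeasure M (ball x e) > 0}"

definition real_analytic_on :: "(real \<Rightarrow> complex) \<Rightarrow> real set \<Rightarrow> bool" where
  "real_analytic_on F S \<longleftrightarrow> (\<forall>x\<in>S. \<exists>r>0. \<exists>c::nat \<Rightarrow> complex.
      \<forall>t\<in>ball x r. (\<lambda>n. c n * complex_of_real ((t - x) ^ n)) sums F t)"

end

theory Submission
  imports Defs "HOL-Complex_Analysis.Complex_Analysis"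
begin

(* Let F(t) = int e^(iut) k(u) du, so that f = F on [0,oo). If two finite measures alpha, beta
   carried by [0,oo) satisfy int f(t+s) dalpha(s) = int f(t+s) dbeta(s) for t >= 0, then by Fubini
   the Fourier transform of k (phi_alpha - phi_beta) vanishes on [0,oo), phi denoting characteristic
   functions. The bound M_n <= C n! on the moments of k makes every Fourier transform of the form
   k g, g bounded, the sum of its Taylor series on each interval of length 2, hence real-analytic:
   it vanishes everywhere, so k (phi_alpha - phi_beta) = 0 a.e. and phi_alpha = phi_beta because
   k vanishes on no interval and characteristic functions are continuous.
   Orthogonality of g is the case alpha = g^+, beta = g^-. If mu1 agrees with mu on [0,oo), the
   restriction of mu1 * mu1 to [0,oo) determines t |-> int_{y<0} f(t - y) dmu1(y) there; this is
   the above integral for the reflection of the negative part of mu1, so the negative parts of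
   mu1 and mu coincide as well. *)

lemma space_eq_UNIV_if_sets_borel: "sets M = sets (borel :: real measure) \<Longrightarrow> space M = UNIV"
  using sets_eq_imp_space_eq by fastforce

lemma real_distribution_density_normalize:
  fixes M :: "real measure"
  assumes sM[measurable_cong]: "sets M = sets borel" and M: "emeasure M UNIV = ennreal c" and c: "c > 0"
  shows "real_distribution (density M (\<lambda>_. ennreal (1 / c)))"
    and "char (density M (\<lambda>_. ennreal (1 / c))) t = char M t / c"
proof -
  have "emeasure (density M (\<lambda>_. ennreal (1 / c))) UNIV = ennreal (1 / c) * emeasure M UNIV"
    by (simp add: emeasure_density nn_integral_cmult_indicator space_eq_UNIV_if_sets_borel[OF sM])
  also have "\<dots> = 1" using M c by (simp flip: ennreal_mult)
  finally show "real_distribution (density M (\<lambda>_. ennreal (1 / c)))"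
    using sM space_eq_UNIV_if_sets_borel[OF sM]
    by (auto simp: real_distribution_def real_distribution_axioms_def intro!: prob_spaceI)
  show "char (density M (\<lambda>_. ennreal (1 / c))) t = char M t / c"
    unfolding char_def using c
    by (subst integral_density) (auto simp: scaleR_conv_of_real divide_inverse mult.commute)
qed

lemma finite_measure_eq_if_char_eq:
  fixes M N :: "real measure"
  assumes "finite_measure M" "finite_measure N"
    and sM: "sets M = sets borel" and sN: "sets N = sets borel"
    and char_eq: "\<And>t. char M t = char N t"
  shows "M = N"
proof -
  interpret M: finite_measure M by fact
  interpret N: finite_measure N by fact
  define c where "c = measure M UNIV"
  have "char M 0 = c" "char N 0 = measure N UNIV"
    by (simp_all add: c_def char_def space_eq_UNIV_if_sets_borel[OF sM]
        space_eq_UNIV_if_sets_borel[OF sN] scaleR_conv_of_real)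
  then have eM: "emeasure M UNIV = ennreal c" and eN: "emeasure N UNIV = ennreal c"
    using char_eq[of 0] M.emeasure_eq_measure N.emeasure_eq_measure
      space_eq_UNIV_if_sets_borel[OF sM] space_eq_UNIV_if_sets_borel[OF sN]
    by (auto simp: c_def)
  show ?thesis
  proof (cases "c = 0")
    case True
    then have "emeasure M A = 0" "emeasure N A = 0" for A
      using eM eN emeasure_space[of M A] emeasure_space[of N A]
      by (simp_all add: space_eq_UNIV_if_sets_borel[OF sM] space_eq_UNIV_if_sets_borel[OF sN])
    then show ?thesis by (intro measure_eqI) (simp_all add: sM sN)
  next
    case False
    then have c: "c > 0" using measure_nonneg[of M UNIV] unfolding c_def by linarith
    have scaled: "emeasure (density L (\<lambda>_. ennreal (1 / c))) A = ennreal (1 / c) * emeasure L A"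
      if "sets L = sets borel" "A \<in> sets borel" for L :: "real measure" and A
      using that by (simp add: emeasure_density nn_integral_cmult_indicator)
    have "density M (\<lambda>_. ennreal (1 / c)) = density N (\<lambda>_. ennreal (1 / c))"
      using real_distribution_density_normalize[OF sM eM c] real_distribution_density_normalize[OF sN eN c]
      by (intro Levy_uniqueness) (auto simp: char_eq)
    then show ?thesis
      using c scaled[OF sM] scaled[OF sN]
      by (intro measure_eqI) (auto simp: sM sN ennreal_mult_cancel_left)
  qed
qed

definition fourier_transform :: "(real \<Rightarrow> complex) \<Rightarrow> real \<Rightarrow> complex" where
  "fourier_transform h t = (LINT u|lborel. exp (\<i> * complex_of_real (u * t)) * h u)"

lemma integrable_fourier_integrand:
  assumes "integrable lborel h"
  shows "integrable lborel (\<lambda>u. exp (\<i> * complex_of_real (u * t)) * h u)"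
proof (rule Bochner_Integration.integrable_bound[OF integrable_norm[OF assms]])
  show "(\<lambda>u. exp (\<i> * complex_of_real (u * t)) * h u) \<in> borel_measurable lborel"
    using assms by auto
qed (auto simp: norm_mult norm_exp_i_times)

lemma norm_fourier_transform_le: "norm (fourier_transform h t) \<le> (LINT u|lborel. cmod (h u))"
proof -
  have "norm (fourier_transform h t) \<le> (LINT u|lborel. norm (exp (\<i> * complex_of_real (u * t)) * h u))"
    unfolding fourier_transform_def by (rule integral_norm_bound)
  then show ?thesis by (simp add: norm_mult norm_exp_i_times)
qed

lemma finite_measure_density_lborel:
  assumes "integrable lborel q" "\<And>u. q u \<ge> 0"
  shows "finite_measure (density lborel (\<lambda>u. ennreal (q u)))"
proof (rule finite_measureI)
  have "emeasure (density lborel (\<lambda>u. ennreal (q u))) UNIV = (\<integral>\<^sup>+u. ennreal (q u) \<partial>lborel)"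
    using assms by (subst emeasure_density) auto
  also have "\<dots> < \<infinity>"
    using assms by (simp add: integrable_iff_bounded)
  finally show "emeasure (density lborel (\<lambda>u. ennreal (q u))) (space (density lborel (\<lambda>u. ennreal (q u)))) \<noteq> \<infinity>"
    by simp
qed

lemma char_density_lborel:
  assumes [measurable]: "q \<in> borel_measurable borel" and "\<And>u. q u \<ge> 0"
  shows "char (density lborel (\<lambda>u. ennreal (q u))) t = fourier_transform (\<lambda>u. complex_of_real (q u)) t"
  unfolding char_def fourier_transform_def using assms(2)
  by (subst integral_density) (auto simp: scaleR_conv_of_real mult.commute mult.left_commute)

lemma AE_eq_0_if_fourier_transform_of_real_eq_0:
  fixes q :: "real \<Rightarrow> real"
  assumes q: "integrable lborel q"
    and ft0: "\<And>t. fourier_transform (\<lambda>u. complex_of_real (q u)) t = 0"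
  shows "AE u in lborel. q u = 0"
proof -
  have [measurable]: "q \<in> borel_measurable borel" using q by auto
  have int_pos: "integrable lborel (\<lambda>u. max 0 (q u))" and int_neg: "integrable lborel (\<lambda>u. max 0 (- q u))"
    using q by (auto intro: integrable_max)
  have "fourier_transform (\<lambda>u. complex_of_real (q u)) t =
      (LINT u|lborel. exp (\<i> * complex_of_real (u * t)) * complex_of_real (max 0 (q u))
        - exp (\<i> * complex_of_real (u * t)) * complex_of_real (max 0 (- q u)))" for t
    unfolding fourier_transform_def
    by (intro Bochner_Integration.integral_cong) (auto simp: max_def algebra_simps)
  also have "\<dots> t = fourier_transform (\<lambda>u. complex_of_real (max 0 (q u))) t
      - fourier_transform (\<lambda>u. complex_of_real (max 0 (- q u))) t" for t
    unfolding fourier_transform_def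
    by (intro Bochner_Integration.integral_diff integrable_fourier_integrand integrable_of_real
        int_pos int_neg)
  finally have "fourier_transform (\<lambda>u. complex_of_real (max 0 (q u))) t
      - fourier_transform (\<lambda>u. complex_of_real (max 0 (- q u))) t
      = fourier_transform (\<lambda>u. complex_of_real (q u)) t" for t
    by simp
  then have "char (density lborel (\<lambda>u. ennreal (max 0 (q u)))) t =
      char (density lborel (\<lambda>u. ennreal (max 0 (- q u)))) t" for t
    using ft0 by (subst (1 2) char_density_lborel) auto
  then have "density lborel (\<lambda>u. ennreal (max 0 (q u))) = density lborel (\<lambda>u. ennreal (max 0 (- q u)))"
    by (intro finite_measure_eq_if_char_eq finite_measure_density_lborel int_pos int_neg) auto
  then have "AE u in lborel. ennreal (max 0 (q u)) = ennreal (max 0 (- q u))"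
    by (subst (asm) sigma_finite_measure.density_unique_iff[OF sigma_finite_lborel]) auto
  then show ?thesis
    by eventually_elim (auto simp: max_def split: if_splits)
qed

lemma AE_eq_0_if_fourier_transform_eq_0:
  fixes h :: "real \<Rightarrow> complex"
  assumes h: "integrable lborel h" and ft0: "\<And>t. fourier_transform h t = 0"
  shows "AE u in lborel. h u = 0"
proof -
  have Re0: "AE u in lborel. Re (g u) = 0"
    if g: "integrable lborel g" and "\<And>t. fourier_transform g t = 0" for g
  proof (rule AE_eq_0_if_fourier_transform_of_real_eq_0)
    show "integrable lborel (\<lambda>u. Re (g u))" using g by auto
    fix t
    have Re_integrand: "exp (\<i> * complex_of_real (u * t)) * complex_of_real (Re (g u)) =
        (exp (\<i> * complex_of_real (u * t)) * g u + cnj (exp (\<i> * complex_of_real (u * - t)) * g u)) / 2" for u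
    proof -
      have "cnj (exp (\<i> * complex_of_real (u * - t))) = exp (\<i> * complex_of_real (u * t))"
        by (simp add: exp_cnj)
      then have "(exp (\<i> * complex_of_real (u * t)) * g u + cnj (exp (\<i> * complex_of_real (u * - t)) * g u)) / 2
          = exp (\<i> * complex_of_real (u * t)) * ((g u + cnj (g u)) / 2)"
        by (simp add: algebra_simps)
      also have "(g u + cnj (g u)) / 2 = complex_of_real (Re (g u))"
        by (simp add: complex_add_cnj)
      finally show ?thesis by simp
    qed
    then have "fourier_transform (\<lambda>u. complex_of_real (Re (g u))) t
        = (fourier_transform g t + cnj (fourier_transform g (- t))) / 2"
      unfolding fourier_transform_def Re_integrand integral_divide_zero
        Bochner_Integration.integral_add[OF integrable_fourier_integrand[OF g]
          integrable_cnj[OF integrable_fourier_integrand[OF g]]]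
      by (simp only: Bochner_Integration.integral_cnj)
    then show "fourier_transform (\<lambda>u. complex_of_real (Re (g u))) t = 0"
      using that(2) by simp
  qed
  have "AE u in lborel. Re (h u) = 0"
    using h ft0 by (rule Re0)
  moreover have "AE u in lborel. Re (- \<i> * h u) = 0"
    using h ft0 by (intro Re0) (auto simp: fourier_transform_def mult.left_commute)
  ultimately show ?thesis
    by eventually_elim (simp add: complex_eq_iff)
qed

definition fact_moment_bound :: "(real \<Rightarrow> complex) \<Rightarrow> real \<Rightarrow> bool" where
  "fact_moment_bound w C \<longleftrightarrow> w \<in> borel_measurable borel \<and>
     (\<forall>n. integrable lborel (\<lambda>u. \<bar>u\<bar> ^ n * cmod (w u))) \<and>
     (\<forall>n. (LINT u|lborel. \<bar>u\<bar> ^ n * cmod (w u)) \<le> C * fact n)"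

lemma bounded_if_limsup_less_infinity:
  fixes a :: "nat \<Rightarrow> real"
  assumes "limsup (\<lambda>n. ereal (a n)) < \<infinity>"
  shows "\<exists>C. \<forall>n. a n \<le> C"
proof -
  obtain N :: nat where "limsup (\<lambda>n. ereal (a n)) < ereal (real N)"
    using assms less_PInf_Ex_of_nat by auto
  then have "eventually (\<lambda>n. ereal (a n) < ereal (real N)) sequentially"
    by (rule Limsup_lessD)
  then obtain N0 where N0: "\<And>n. n \<ge> N0 \<Longrightarrow> a n < real N"
    unfolding eventually_sequentially by auto
  have "a n \<le> real N + (\<Sum>m<N0. \<bar>a m\<bar>)" for n
  proof (cases "n < N0")
    case True
    then have "a n \<le> (\<Sum>m<N0. \<bar>a m\<bar>)"
      using member_le_sum[of n "{..<N0}" "\<lambda>m. \<bar>a m\<bar>"] by simp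
    then show ?thesis by simp
  next
    case False
    then have "a n < real N" using N0 by simp
    moreover have "0 \<le> (\<Sum>m<N0. \<bar>a m\<bar>)" by (rule sum_nonneg) simp
    ultimately show ?thesis by linarith
  qed
  then show ?thesis by blast
qed

lemma fact_moment_bound_if_limsup:
  assumes "w \<in> borel_measurable borel"
    and "\<And>n. integrable lborel (\<lambda>u. \<bar>u\<bar> ^ n * cmod (w u))"
    and "limsup (\<lambda>n. ereal ((LINT u|lborel. \<bar>u\<bar> ^ n * cmod (w u)) / fact n)) < \<infinity>"
  shows "\<exists>C. fact_moment_bound w C"
proof -
  obtain C where "\<And>n. (LINT u|lborel. \<bar>u\<bar> ^ n * cmod (w u)) / fact n \<le> C"
    using bounded_if_limsup_less_infinity[OF assms(3)] by blast
  then have "(LINT u|lborel. \<bar>u\<bar> ^ n * cmod (w u)) \<le> C * fact n" for n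
    by (simp add: divide_le_eq)
  then show ?thesis using assms(1,2) unfolding fact_moment_bound_def by blast
qed

lemma fact_moment_bound_integrable:
  assumes "fact_moment_bound w C"
  shows "integrable lborel w"
proof -
  have "integrable lborel (\<lambda>u. \<bar>u\<bar> ^ 0 * cmod (w u))" "w \<in> borel_measurable borel"
    using assms unfolding fact_moment_bound_def by blast+
  then show ?thesis by (simp add: integrable_norm_iff)
qed

lemma fact_moment_bound_mult:
  assumes w: "fact_moment_bound w C"
    and g[measurable]: "g \<in> borel_measurable borel" and g_le: "\<And>u. cmod (g u) \<le> c"
  shows "fact_moment_bound (\<lambda>u. w u * g u) (c * C)"
proof -
  have w_meas[measurable]: "w \<in> borel_measurable borel"
    and w_int: "\<And>n. integrable lborel (\<lambda>u. \<bar>u\<bar> ^ n * cmod (w u))"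
    and w_le: "\<And>n. (LINT u|lborel. \<bar>u\<bar> ^ n * cmod (w u)) \<le> C * fact n"
    using w unfolding fact_moment_bound_def by auto
  have c: "c \<ge> 0" using g_le[of 0] norm_ge_zero order_trans by blast
  have le: "\<bar>u\<bar> ^ n * cmod (w u * g u) \<le> c * (\<bar>u\<bar> ^ n * cmod (w u))" for u n
    using mult_right_mono[OF g_le[of u], of "\<bar>u\<bar> ^ n * cmod (w u)"] by (simp add: norm_mult mult_ac)
  have int: "integrable lborel (\<lambda>u. \<bar>u\<bar> ^ n * cmod (w u * g u))" for n
    by (rule Bochner_Integration.integrable_bound[OF integrable_mult_right[OF w_int[of n], of c]])
      (use le c in \<open>auto simp: abs_mult\<close>)
  have "(LINT u|lborel. \<bar>u\<bar> ^ n * cmod (w u * g u)) \<le> (LINT u|lborel. c * (\<bar>u\<bar> ^ n * cmod (w u)))" for n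
    by (intro integral_mono int integrable_mult_right w_int le)
  also have "\<dots> n \<le> c * C * fact n" for n
    using mult_left_mono[OF w_le c] by (simp add: mult_ac)
  finally show ?thesis
    unfolding fact_moment_bound_def using int by auto
qed

definition fourier_taylor_coeff :: "(real \<Rightarrow> complex) \<Rightarrow> real \<Rightarrow> nat \<Rightarrow> complex" where
  "fourier_taylor_coeff w x n = (\<i> ^ n / fact n) *
     (LINT u|lborel. complex_of_real (u ^ n) * exp (\<i> * complex_of_real (u * x)) * w u)"

lemma norm_fourier_taylor_coeff_le:
  assumes "fact_moment_bound w C"
  shows "norm (fourier_taylor_coeff w x n) \<le> C"
proof -
  have "norm (LINT u|lborel. complex_of_real (u ^ n) * exp (\<i> * complex_of_real (u * x)) * w u)
      \<le> (LINT u|lborel. norm (complex_of_real (u ^ n) * exp (\<i> * complex_of_real (u * x)) * w u))"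
    by (rule integral_norm_bound)
  also have "\<dots> = (LINT u|lborel. \<bar>u\<bar> ^ n * cmod (w u))"
    by (simp add: norm_mult norm_power norm_exp_i_times)
  also have "\<dots> \<le> C * fact n"
    using assms unfolding fact_moment_bound_def by blast
  finally show ?thesis
    unfolding fourier_taylor_coeff_def by (simp add: norm_mult norm_divide norm_power field_simps)
qed

lemma fourier_transform_sums:
  assumes w: "fact_moment_bound w C" and tx: "\<bar>t - x\<bar> < 1"
  shows "(\<lambda>n. fourier_taylor_coeff w x n * complex_of_real ((t - x) ^ n)) sums fourier_transform w t"
proof -
  have [measurable]: "w \<in> borel_measurable borel"
    and mom: "\<And>n. integrable lborel (\<lambda>u. \<bar>u\<bar> ^ n * cmod (w u))"
    and mom_le: "\<And>n. (LINT u|lborel. \<bar>u\<bar> ^ n * cmod (w u)) \<le> C * fact n"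
    using w unfolding fact_moment_bound_def by auto
  define F where "F n u = (exp (\<i> * complex_of_real (u * x)) * w u) *
      ((\<i> * complex_of_real (u * (t - x))) ^ n /\<^sub>R fact n)" for n u
  have norm_F: "norm (F n u) = \<bar>t - x\<bar> ^ n / fact n * (\<bar>u\<bar> ^ n * cmod (w u))" for n u
    unfolding F_def
    by (simp add: norm_mult norm_power norm_exp_i_times abs_mult power_mult_distrib divide_inverse
        flip: of_real_diff)
  have integral_F: "integral\<^sup>L lborel (F n) = fourier_taylor_coeff w x n * complex_of_real ((t - x) ^ n)" for n
  proof -
    have F_eq: "F n = (\<lambda>u. (\<i> ^ n / fact n * complex_of_real ((t - x) ^ n)) *
        (complex_of_real (u ^ n) * exp (\<i> * complex_of_real (u * x)) * w u))"
      unfolding F_def scaleR_conv_of_real power_mult_distrib of_real_mult of_real_power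
      by (simp add: divide_inverse mult_ac)
    then show ?thesis
      unfolding F_eq fourier_taylor_coeff_def integral_mult_right_zero by (simp only: mult_ac)
  qed
  have [measurable]: "F n \<in> borel_measurable borel" for n
    unfolding F_def by measurable
  have F_int: "integrable lborel (F n)" for n
    by (rule Bochner_Integration.integrable_bound[OF integrable_mult_right[OF mom[of n],
          of "\<bar>t - x\<bar> ^ n / fact n"]])
      (auto simp: norm_F)
  \<comment> \<open>pointwise, \<open>\<Sum>n. F n u\<close> is the exponential series of \<open>exp (\<i>u(t - x))\<close>\<close>
  have F_sums: "(\<lambda>n. F n u) sums (exp (\<i> * complex_of_real (u * t)) * w u)" for u
  proof -
    have "(\<lambda>n. F n u) sums ((exp (\<i> * complex_of_real (u * x)) * w u) *
        exp (\<i> * complex_of_real (u * (t - x))))"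
      unfolding F_def by (intro sums_mult exp_converges)
    also have "(exp (\<i> * complex_of_real (u * x)) * w u) * exp (\<i> * complex_of_real (u * (t - x)))
        = (exp (\<i> * complex_of_real (u * x)) * exp (\<i> * complex_of_real (u * (t - x)))) * w u"
      by (simp only: mult_ac)
    also have "exp (\<i> * complex_of_real (u * x)) * exp (\<i> * complex_of_real (u * (t - x))) =
        exp (\<i> * complex_of_real (u * t))"
      by (simp add: exp_add[symmetric] algebra_simps)
    finally show ?thesis .
  qed
  have "summable (\<lambda>n. norm (F n u))" for u
    using summable_mult2[OF summable_exp_generic[of "\<bar>u * (t - x)\<bar>"], of "cmod (w u)"]
    by (simp add: norm_F abs_mult power_mult_distrib divide_inverse mult_ac)
  moreover have "summable (\<lambda>n. LINT u|lborel. norm (F n u))"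
  proof (rule summable_comparison_test)
    show "summable (\<lambda>n. C * \<bar>t - x\<bar> ^ n)"
      using tx by (intro summable_mult summable_geometric) simp
    have "(LINT u|lborel. norm (F n u)) = \<bar>t - x\<bar> ^ n / fact n * (LINT u|lborel. \<bar>u\<bar> ^ n * cmod (w u))" for n
      unfolding norm_F by simp
    also have "\<dots> n \<le> \<bar>t - x\<bar> ^ n / fact n * (C * fact n)" for n
      by (intro mult_left_mono mom_le) auto
    finally have "(LINT u|lborel. norm (F n u)) \<le> C * \<bar>t - x\<bar> ^ n" for n
      by (simp add: mult.commute)
    then show "\<exists>N. \<forall>n\<ge>N. norm (LINT u|lborel. norm (F n u)) \<le> C * \<bar>t - x\<bar> ^ n"
      by (simp add: integral_nonneg_AE)
  qed
  ultimately have "(\<lambda>n. integral\<^sup>L lborel (F n)) sums (LINT u|lborel. (\<Sum>n. F n u))"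
    by (intro sums_integral F_int) auto
  then show ?thesis
    using F_sums by (simp add: integral_F sums_iff fourier_transform_def)
qed

lemma fourier_transform_eq_0_near_limit_point:
  assumes w: "fact_moment_bound w C"
    and y: "y islimpt {t. fourier_transform w t = 0}" and s: "\<bar>s - y\<bar> < 1"
  shows "fourier_transform w s = 0"
proof -
  define P where "P = Abs_fps (fourier_taylor_coeff w y)"
  have radius: "fps_conv_radius P \<ge> 1"
    unfolding fps_conv_radius_def P_def fps_nth_Abs_fps
  proof (rule conv_radius_geI_ex')
    fix r :: real assume r: "0 < r" "ereal r < 1"
    show "summable (\<lambda>n. fourier_taylor_coeff w y n * complex_of_real r ^ n)"
    proof (rule summable_comparison_test)
      show "summable (\<lambda>n. C * r ^ n)" using r by (intro summable_mult summable_geometric) simp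
      show "\<exists>N. \<forall>n\<ge>N. norm (fourier_taylor_coeff w y n * complex_of_real r ^ n) \<le> C * r ^ n"
        using r norm_fourier_taylor_coeff_le[OF w]
        by (auto simp: norm_mult norm_power intro!: mult_right_mono)
    qed
  qed
  have "ball (0 :: complex) 1 \<subseteq> eball 0 (fps_conv_radius P)"
  proof
    fix z :: complex assume "z \<in> ball 0 1"
    then have "ereal (norm z) < 1" by simp
    also note radius
    finally show "z \<in> eball 0 (fps_conv_radius P)" by simp
  qed
  then have P_holo: "eval_fps P holomorphic_on ball 0 1"
    by (rule holomorphic_on_eval_fps)
  define G where "G z = eval_fps P (z - complex_of_real y)" for z
  have "(eval_fps P \<circ> (\<lambda>z. z - complex_of_real y)) holomorphic_on ball (complex_of_real y) 1"
    by (rule holomorphic_on_compose_gen[OF _ P_holo])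
      (auto intro!: holomorphic_intros simp: dist_norm norm_minus_commute)
  then have holo: "G holomorphic_on ball (complex_of_real y) 1"
    unfolding G_def[abs_def] comp_def .
  have G_real: "G (complex_of_real t) = fourier_transform w t" if "\<bar>t - y\<bar> < 1" for t
    using fourier_transform_sums[OF w that]
    unfolding G_def P_def eval_fps_def by (simp add: sums_iff flip: of_real_diff)
  let ?U = "complex_of_real ` {t. \<bar>t - y\<bar> < 1 \<and> fourier_transform w t = 0}"
  have "G (complex_of_real s) = 0"
  proof (rule analytic_continuation[OF holo])
    show "open (ball (complex_of_real y) 1)" "connected (ball (complex_of_real y) 1)"
      "complex_of_real y \<in> ball (complex_of_real y) 1"
      by auto
    show "?U \<subseteq> ball (complex_of_real y) 1" "complex_of_real s \<in> ball (complex_of_real y) 1"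
      using s by (auto simp: dist_real_def)
    show "G z = 0" if "z \<in> ?U" for z
      using that G_real by auto
    show "complex_of_real y islimpt ?U"
    proof (rule islimpt_approachable[THEN iffD2], intro allI impI)
      fix e :: real assume "e > 0"
      then obtain t where "t \<noteq> y" "dist t y < min e 1" "fourier_transform w t = 0"
        using y unfolding islimpt_approachable by (metis (mono_tags) mem_Collect_eq min_less_iff_conj zero_less_one)
      then show "\<exists>z\<in>?U. z \<noteq> complex_of_real y \<and> dist z (complex_of_real y) < e"
        by (intro bexI[of _ "complex_of_real t"]) (auto simp: dist_real_def)
    qed
  qed
  then show ?thesis using G_real[OF s] by simp
qed

lemma AE_lborel_obtain_in_interval:
  assumes "AE t in lborel. P t" "a < (b::real)"
  obtains t where "a < t" "t < b" "P t"
proof -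
  have "emeasure lborel {a<..<b} \<noteq> 0" using assms(2) by simp
  then have "\<not> (AE t in lborel. t \<notin> {a<..<b})"
    by (subst AE_iff_measurable[of "{a<..<b}"]) auto
  moreover have "AE t in lborel. t \<notin> {a<..<b}" if "\<nexists>t. a < t \<and> t < b \<and> P t"
    using assms(1) by eventually_elim (use that in auto)
  ultimately show ?thesis using that by blast
qed

text \<open>The limit points of the zero set form a nonempty clopen subset of the real line: it is open
  because every limit point of zeros is the centre of a unit interval of zeros.\<close>

lemma fourier_transform_eq_0_if_AE_eq_0_on_nonneg:
  assumes w: "fact_moment_bound w C"
    and ae: "AE t in lborel. t \<ge> 0 \<longrightarrow> fourier_transform w t = 0"
  shows "fourier_transform w s = 0"
proof -
  define Z where "Z = {t. fourier_transform w t = 0}"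
  define L where "L = {y. y islimpt Z}"
  have ball_in_Z: "ball y 1 \<subseteq> Z" if "y \<in> L" for y
    using fourier_transform_eq_0_near_limit_point[OF w] that
    by (auto simp: L_def Z_def dist_real_def abs_minus_commute)
  have "open L"
  proof (rule openI)
    fix y assume "y \<in> L"
    have "x islimpt Z" if "x \<in> ball y 1" for x
      using islimpt_subset[of x "ball y 1" Z] ball_in_Z[OF \<open>y \<in> L\<close>] that by (simp add: islimpt_ball)
    then have "ball y 1 \<subseteq> L" unfolding L_def by blast
    then show "\<exists>e>0. ball y e \<subseteq> L" using zero_less_one by blast
  qed
  moreover have "closed L" unfolding L_def by (rule closed_limpts)
  moreover have "1 \<in> L"
    unfolding L_def islimpt_approachable
  proof (intro CollectI allI impI)
    fix e :: real assume "e > 0"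
    then obtain t where "1 < t" "t < 1 + e" "t \<ge> 0 \<longrightarrow> fourier_transform w t = 0"
      using AE_lborel_obtain_in_interval[OF ae, of 1 "1 + e"] by auto
    then show "\<exists>t\<in>Z. t \<noteq> 1 \<and> dist t 1 < e" by (auto simp: Z_def dist_real_def)
  qed
  ultimately have "L = UNIV" using clopen by blast
  moreover have "s \<in> ball s 1" by simp
  ultimately have "s \<in> Z" using ball_in_Z[of s] by blast
  then show ?thesis by (simp add: Z_def)
qed

lemma char_measurable_finite:
  assumes "finite_measure M" and [measurable_cong]: "sets M = sets borel"
  shows "char M \<in> borel_measurable borel"
proof -
  interpret finite_measure M by fact
  have "(\<lambda>x. \<integral>s. exp (\<i> * complex_of_real (x * s)) \<partial>M) \<in> borel_measurable borel"
    by (rule borel_measurable_lebesgue_integral) measurable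
  then show ?thesis unfolding char_def[abs_def] .
qed

lemma norm_char_le_measure:
  assumes "finite_measure M" and "sets M = sets borel"
  shows "norm (char M t) \<le> measure M UNIV"
proof -
  interpret finite_measure M by fact
  have "norm (char M t) \<le> (\<integral>s. norm (exp (\<i> * complex_of_real (t * s))) \<partial>M)"
    unfolding char_def by (rule integral_norm_bound)
  then show ?thesis
    using space_eq_UNIV_if_sets_borel[OF assms(2)] by (simp add: norm_exp_i_times)
qed

lemma isCont_char_finite:
  assumes "finite_measure M" and [measurable_cong]: "sets M = sets borel"
  shows "isCont (char M) t"
proof -
  interpret finite_measure M by fact
  show ?thesis
    unfolding continuous_at_sequentially comp_def char_def
    by (auto intro!: integral_dominated_convergence[where w="\<lambda>_. 1"] tendsto_intros)
qed

lemma fourier_transform_mult_char: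
  assumes k: "integrable lborel k"
    and "finite_measure M" and sM[measurable_cong]: "sets M = sets borel"
  shows "fourier_transform (\<lambda>u. k u * char M u) t = (\<integral>s. fourier_transform k (t + s) \<partial>M)"
proof -
  interpret M: finite_measure M by fact
  interpret pair_sigma_finite lborel M by unfold_locales
  have [measurable]: "k \<in> borel_measurable borel" using k by auto
  define g where "g u s = exp (\<i> * complex_of_real (u * (t + s))) * k u" for u s
  have [measurable]: "case_prod g \<in> borel_measurable (lborel \<Otimes>\<^sub>M M)"
    unfolding g_def by measurable
  have norm_g: "norm (g u s) = norm (k u)" for u s
    unfolding g_def by (simp add: norm_mult norm_exp_i_times)
  have "integrable (lborel \<Otimes>\<^sub>M M) (case_prod g)"
  proof (rule Fubini_integrable)
    show "integrable lborel (\<lambda>u. \<integral>s. norm (case_prod g (u, s)) \<partial>M)"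
      using k space_eq_UNIV_if_sets_borel[OF sM] by (simp add: norm_g)
    show "AE u in lborel. integrable M (\<lambda>s. case_prod g (u, s))"
    proof (rule AE_I2)
      fix u
      show "integrable M (\<lambda>s. case_prod g (u, s))"
        by (rule M.integrable_const_bound[where B="norm (k u)"]) (auto simp: norm_g)
    qed
  qed measurable
  then have Fubini: "(LINT u|lborel. (\<integral>s. g u s \<partial>M)) = (\<integral>s. (LINT u|lborel. g u s) \<partial>M)"
    by (rule Fubini_integral[symmetric])
  have inner: "(\<integral>s. g u s \<partial>M) = exp (\<i> * complex_of_real (u * t)) * (k u * char M u)" for u
  proof -
    have "g u s = (exp (\<i> * complex_of_real (u * t)) * k u) * exp (\<i> * complex_of_real (u * s))" for s
      unfolding g_def by (simp add: exp_add[symmetric] algebra_simps)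
    then show ?thesis unfolding char_def by (simp add: mult.commute[of u] mult_ac)
  qed
  have "fourier_transform (\<lambda>u. k u * char M u) t = (LINT u|lborel. (\<integral>s. g u s \<partial>M))"
    by (simp only: fourier_transform_def inner)
  also have "\<dots> = (\<integral>s. fourier_transform k (t + s) \<partial>M)"
    unfolding Fubini by (simp only: g_def fourier_transform_def)
  finally show ?thesis .
qed

lemma continuous_eq_0_if_AE_mult_eq_0:
  fixes k g :: "real \<Rightarrow> complex"
  assumes cont: "\<And>u. isCont g u"
    and ae: "AE u in lborel. k u * g u = 0"
    and nonvanish: "\<And>a b. a < b \<Longrightarrow> \<not> (AE u in lborel. u \<in> {a<..<b} \<longrightarrow> k u = 0)"
  shows "g u = 0"
proof (rule ccontr)
  assume "g u \<noteq> 0"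
  then obtain e where "e > 0" and e: "\<And>v. dist u v < e \<Longrightarrow> g v \<noteq> 0"
    using continuous_at_avoid[OF cont] by blast
  have "g v \<noteq> 0" if "v \<in> {u - e<..<u + e}" for v
    using that by (intro e) (auto simp: dist_real_def)
  then have "AE v in lborel. v \<in> {u - e<..<u + e} \<longrightarrow> k v = 0"
    using ae by (auto elim!: eventually_mono)
  then show False using nonvanish[of "u - e" "u + e"] \<open>e > 0\<close> by simp
qed

lemma finite_measure_eq_if_fourier_translates_eq:
  assumes k: "fact_moment_bound k C"
    and nonvanish: "\<And>a b. a < b \<Longrightarrow> \<not> (AE u in lborel. u \<in> {a<..<b} \<longrightarrow> k u = 0)"
    and \<alpha>: "finite_measure \<alpha>" "sets \<alpha> = sets borel"
    and \<beta>: "finite_measure \<beta>" "sets \<beta> = sets borel"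
    and eq: "AE t in lborel. t \<ge> 0 \<longrightarrow>
      (\<integral>s. fourier_transform k (t + s) \<partial>\<alpha>) = (\<integral>s. fourier_transform k (t + s) \<partial>\<beta>)"
  shows "\<alpha> = \<beta>"
proof -
  define g where "g u = char \<alpha> u - char \<beta> u" for u
  have [measurable]: "g \<in> borel_measurable borel"
    unfolding g_def using char_measurable_finite[OF \<alpha>] char_measurable_finite[OF \<beta>] by measurable
  have "cmod (g u) \<le> measure \<alpha> UNIV + measure \<beta> UNIV" for u
    unfolding g_def
    using norm_triangle_ineq4[of "char \<alpha> u" "char \<beta> u"]
      add_mono[OF norm_char_le_measure[OF \<alpha>, of u] norm_char_le_measure[OF \<beta>, of u]]
    by linarith
  then have w: "fact_moment_bound (\<lambda>u. k u * g u) ((measure \<alpha> UNIV + measure \<beta> UNIV) * C)"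
    by (intro fact_moment_bound_mult[OF k]) auto
  have k_int: "integrable lborel k"
    by (rule fact_moment_bound_integrable[OF k])
  have "fourier_transform (\<lambda>u. k u * g u) t =
      (\<integral>s. fourier_transform k (t + s) \<partial>\<alpha>) - (\<integral>s. fourier_transform k (t + s) \<partial>\<beta>)" for t
  proof -
    have "fourier_transform (\<lambda>u. k u * g u) t =
        fourier_transform (\<lambda>u. k u * char \<alpha> u) t - fourier_transform (\<lambda>u. k u * char \<beta> u) t"
      unfolding fourier_transform_def g_def right_diff_distrib
      using fact_moment_bound_integrable[OF fact_moment_bound_mult[OF k char_measurable_finite[OF \<alpha>] norm_char_le_measure[OF \<alpha>]]]
        fact_moment_bound_integrable[OF fact_moment_bound_mult[OF k char_measurable_finite[OF \<beta>] norm_char_le_measure[OF \<beta>]]]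
      by (intro Bochner_Integration.integral_diff integrable_fourier_integrand)
    then show ?thesis
      by (simp only: fourier_transform_mult_char[OF k_int \<alpha>] fourier_transform_mult_char[OF k_int \<beta>])
  qed
  then have "AE t in lborel. t \<ge> 0 \<longrightarrow> fourier_transform (\<lambda>u. k u * g u) t = 0"
    using eq by simp
  then have "fourier_transform (\<lambda>u. k u * g u) t = 0" for t
    by (rule fourier_transform_eq_0_if_AE_eq_0_on_nonneg[OF w])
  then have "AE u in lborel. k u * g u = 0"
    by (intro AE_eq_0_if_fourier_transform_eq_0 fact_moment_bound_integrable[OF w])
  moreover have "isCont g u" for u
    unfolding g_def by (intro continuous_intros isCont_char_finite \<alpha> \<beta>)
  ultimately have "g u = 0" for u
    using continuous_eq_0_if_AE_mult_eq_0[OF _ _ nonvanish] by blast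
  then show ?thesis
    by (intro finite_measure_eq_if_char_eq \<alpha> \<beta>) (simp add: g_def)
qed

lemma measurable_fourier_transform [measurable]:
  assumes [measurable]: "w \<in> borel_measurable borel"
  shows "fourier_transform w \<in> borel_measurable borel"
  unfolding fourier_transform_def[abs_def]
  by (rule sigma_finite_measure.borel_measurable_lebesgue_integral[OF sigma_finite_lborel]) measurable

lemma integral_fourier_translate_eq_of_real:
  assumes f_repr: "\<And>t. t \<ge> 0 \<Longrightarrow> complex_of_real (f t) = fourier_transform k t"
    and [measurable]: "f \<in> borel_measurable borel" "k \<in> borel_measurable borel"
    and sM[measurable_cong]: "sets M = sets borel" and M: "emeasure M {..<0} = 0" and t: "t \<ge> 0"
  shows "(\<integral>s. fourier_transform k (t + s) \<partial>M) = complex_of_real (\<integral>s. f (t + s) \<partial>M)"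
proof -
  have "AE s in M. s \<ge> 0"
    using M by (subst AE_iff_measurable[of "{..<0}"]) (auto simp: space_eq_UNIV_if_sets_borel[OF sM])
  then have "(\<integral>s. fourier_transform k (t + s) \<partial>M) = (\<integral>s. complex_of_real (f (t + s)) \<partial>M)"
    by (intro integral_cong_AE) (auto simp: f_repr t)
  then show ?thesis by simp
qed

lemma finite_measure_eq_if_translate_integrals_eq:
  assumes k: "fact_moment_bound k C"
    and nonvanish: "\<And>a b. a < b \<Longrightarrow> \<not> (AE u in lborel. u \<in> {a<..<b} \<longrightarrow> k u = 0)"
    and f_repr: "\<And>t. t \<ge> 0 \<Longrightarrow> complex_of_real (f t) = fourier_transform k t"
    and f: "f \<in> borel_measurable borel"
    and \<alpha>: "finite_measure \<alpha>" "sets \<alpha> = sets borel" "emeasure \<alpha> {..<0} = 0"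
    and \<beta>: "finite_measure \<beta>" "sets \<beta> = sets borel" "emeasure \<beta> {..<0} = 0"
    and eq: "AE t in lborel. t \<ge> 0 \<longrightarrow> (\<integral>s. f (t + s) \<partial>\<alpha>) = (\<integral>s. f (t + s) \<partial>\<beta>)"
  shows "\<alpha> = \<beta>"
proof (rule finite_measure_eq_if_fourier_translates_eq[OF k nonvanish \<alpha>(1,2) \<beta>(1,2)])
  have [measurable]: "k \<in> borel_measurable borel"
    using k unfolding fact_moment_bound_def by blast
  show "AE t in lborel. t \<ge> 0 \<longrightarrow>
      (\<integral>s. fourier_transform k (t + s) \<partial>\<alpha>) = (\<integral>s. fourier_transform k (t + s) \<partial>\<beta>)"
    using eq by eventually_elim
      (simp add: integral_fourier_translate_eq_of_real[OF f_repr f] \<alpha>(2,3) \<beta>(2,3))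
qed

lemma abs_le_if_fourier_repr:
  assumes "\<And>t. t \<ge> 0 \<Longrightarrow> complex_of_real (f t) = fourier_transform k t" and "t \<ge> 0"
  shows "\<bar>f t\<bar> \<le> (LINT u|lborel. cmod (k u))"
  using norm_fourier_transform_le[of k t] assms by (metis norm_of_real)

lemma AE_eq_0_if_translate_integrals_eq_0:
  fixes g :: "real \<Rightarrow> real"
  assumes k: "fact_moment_bound k C"
    and nonvanish: "\<And>a b. a < b \<Longrightarrow> \<not> (AE u in lborel. u \<in> {a<..<b} \<longrightarrow> k u = 0)"
    and f_repr: "\<And>t. t \<ge> 0 \<Longrightarrow> complex_of_real (f t) = fourier_transform k t"
    and f[measurable]: "f \<in> borel_measurable borel"
    and g: "set_integrable lborel {0..} g"
    and g_orth: "\<And>t. t \<ge> 0 \<Longrightarrow> (LINT s:{0..}|lborel. f (t + s) * g s) = 0"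
  shows "AE s in lborel. s \<ge> 0 \<longrightarrow> g s = 0"
proof -
  define h where "h s = indicator {0..} s * g s" for s
  have h: "integrable lborel h"
    using g unfolding set_integrable_def h_def by simp
  then have [measurable]: "h \<in> borel_measurable borel" by auto
  define B where "B = (LINT u|lborel. cmod (k u))"
  have f_le: "\<bar>f t\<bar> \<le> B" if "t \<ge> 0" for t
    unfolding B_def using abs_le_if_fourier_repr[OF f_repr that] .
  have B: "B \<ge> 0" using f_le[of 0] by simp
  have part: "finite_measure (density lborel (\<lambda>s. ennreal (max 0 (q s))))"
      "sets (density lborel (\<lambda>s. ennreal (max 0 (q s)))) = sets borel"
      "emeasure (density lborel (\<lambda>s. ennreal (max 0 (q s)))) {..<0} = 0"
      "t \<ge> 0 \<Longrightarrow> integrable lborel (\<lambda>s. max 0 (q s) * f (t + s))"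
      "(\<integral>s. f (t + s) \<partial>density lborel (\<lambda>s. ennreal (max 0 (q s)))) =
        (LINT s|lborel. max 0 (q s) * f (t + s))"
    if q: "q = h \<or> q = (\<lambda>s. - h s)" for q t
  proof -
    have [measurable]: "q \<in> borel_measurable borel" using q by auto
    have q_le: "max 0 (q s) \<le> \<bar>h s\<bar>" and q_neg: "s < 0 \<Longrightarrow> q s = 0" for s
      using q by (auto simp: h_def)
    show "finite_measure (density lborel (\<lambda>s. ennreal (max 0 (q s))))"
      using h q by (intro finite_measure_density_lborel) (auto intro: integrable_max)
    show "sets (density lborel (\<lambda>s. ennreal (max 0 (q s)))) = sets borel" by simp
    have "(\<lambda>s. ennreal (max 0 (q s)) * indicator {..<0} s) = (\<lambda>s. 0)"
      by (auto simp: q_neg split: split_indicator)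
    then show "emeasure (density lborel (\<lambda>s. ennreal (max 0 (q s)))) {..<0} = 0"
      by (simp add: emeasure_density)
    show "integrable lborel (\<lambda>s. max 0 (q s) * f (t + s))" if "t \<ge> 0"
    proof (rule Bochner_Integration.integrable_bound[OF integrable_mult_right[OF integrable_abs[OF h], of B]])
      have "max 0 (q s) * \<bar>f (t + s)\<bar> \<le> B * \<bar>h s\<bar>" for s
      proof (cases "s < 0")
        case False
        then show ?thesis
          using mult_mono[OF q_le f_le[of "t + s"]] that by (simp add: mult.commute)
      qed (simp add: q_neg B)
      then show "AE s in lborel. norm (max 0 (q s) * f (t + s)) \<le> norm (B * \<bar>h s\<bar>)"
        using B by (auto simp: abs_mult)
    qed measurable
    show "(\<integral>s. f (t + s) \<partial>density lborel (\<lambda>s. ennreal (max 0 (q s)))) =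
        (LINT s|lborel. max 0 (q s) * f (t + s))"
      by (subst integral_density) auto
  qed
  have "density lborel (\<lambda>s. ennreal (max 0 (h s))) = density lborel (\<lambda>s. ennreal (max 0 (- h s)))"
  proof (rule finite_measure_eq_if_translate_integrals_eq[OF k nonvanish f_repr f part(1-3) part(1-3)])
    show "AE t in lborel. t \<ge> 0 \<longrightarrow>
        (\<integral>s. f (t + s) \<partial>density lborel (\<lambda>s. ennreal (max 0 (h s)))) =
        (\<integral>s. f (t + s) \<partial>density lborel (\<lambda>s. ennreal (max 0 (- h s))))"
    proof (intro AE_I2 impI)
      fix t :: real assume t: "t \<ge> 0"
      have "0 = (LINT s:{0..}|lborel. f (t + s) * g s)"
        using g_orth[OF t] by simp
      also have "\<dots> = (LINT s|lborel. max 0 (h s) * f (t + s) - max 0 (- h s) * f (t + s))"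
        unfolding set_lebesgue_integral_def h_def
        by (intro Bochner_Integration.integral_cong) (auto simp: max_def algebra_simps split: split_indicator)
      also have "\<dots> = (LINT s|lborel. max 0 (h s) * f (t + s)) - (LINT s|lborel. max 0 (- h s) * f (t + s))"
        using t by (intro Bochner_Integration.integral_diff part(4)) auto
      finally show "(\<integral>s. f (t + s) \<partial>density lborel (\<lambda>s. ennreal (max 0 (h s)))) =
          (\<integral>s. f (t + s) \<partial>density lborel (\<lambda>s. ennreal (max 0 (- h s))))"
        unfolding part(5)[OF disjI1[OF refl]] part(5)[OF disjI2[OF refl]] by simp
    qed
  qed auto
  then have "AE s in lborel. ennreal (max 0 (h s)) = ennreal (max 0 (- h s))"
    by (subst (asm) sigma_finite_measure.density_unique_iff[OF sigma_finite_lborel]) auto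
  then show ?thesis
    by eventually_elim (auto simp: h_def max_def split: if_splits split_indicator)
qed

lemma agree_on_nonneg_nn_integral:
  assumes sM: "sets M = sets borel" and sN: "sets N = sets borel" and "agree_on_nonneg M N"
    and [measurable]: "G \<in> borel_measurable borel"
  shows "(\<integral>\<^sup>+x. indicator {0..} x * G x \<partial>M) = (\<integral>\<^sup>+x. indicator {0..} x * G x \<partial>N)"
proof -
  have restrict: "emeasure (density L (indicator {0..})) A = emeasure L ({0..} \<inter> A)"
    if "sets L = sets borel" "A \<in> sets borel" for L :: "real measure" and A
    using that by (simp add: emeasure_restricted)
  have "density M (indicator {0..}) = density N (indicator {0..})"
    using assms(3) sM sN
    by (intro measure_eqI) (auto simp: restrict agree_on_nonneg_def)
  then show ?thesis
    using sM sN by (simp add: nn_integral_density[symmetric])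
qed

definition reflected_neg_part :: "real measure \<Rightarrow> real measure" where
  "reflected_neg_part M = distr (density M (indicator {..<0})) borel uminus"

lemma sets_reflected_neg_part [simp, measurable_cong]: "sets (reflected_neg_part M) = sets borel"
  by (simp add: reflected_neg_part_def)

lemma finite_measure_reflected_neg_part:
  assumes "finite_measure M" and sM[measurable_cong]: "sets M = sets borel"
  shows "finite_measure (reflected_neg_part M)"
proof -
  interpret finite_measure M by fact
  let ?N = "density M (indicator {..<0})"
  have "emeasure ?N (space ?N) = emeasure M ({..<0} \<inter> space M)"
    using sM by (simp add: emeasure_restricted space_eq_UNIV_if_sets_borel[OF sM])
  also have "\<dots> \<le> emeasure M (space M)" by (rule emeasure_space)
  also have "\<dots> < \<infinity>" using emeasure_finite[of "space M"] by (simp add: less_top[symmetric])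
  finally have "finite_measure ?N" by (intro finite_measureI) simp
  then show ?thesis
    unfolding reflected_neg_part_def by (rule finite_measure.finite_measure_distr) simp
qed

lemma nn_integral_reflected_neg_part:
  assumes [measurable_cong]: "sets M = sets borel" and [measurable]: "g \<in> borel_measurable borel"
  shows "(\<integral>\<^sup>+s. g s \<partial>reflected_neg_part M) = (\<integral>\<^sup>+y. indicator {..<0} y * g (- y) \<partial>M)"
  unfolding reflected_neg_part_def by (simp add: nn_integral_distr nn_integral_density)

lemma emeasure_reflected_neg_part_lessThan_0:
  assumes "sets M = sets borel"
  shows "emeasure (reflected_neg_part M) {..<0} = 0"
proof -
  have "emeasure (reflected_neg_part M) {..<0} = (\<integral>\<^sup>+y. indicator {..<0} y * indicator {..<0} (- y) \<partial>M)"
    using nn_integral_reflected_neg_part[OF assms, of "indicator {..<0}"] by simp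
  also have "(\<lambda>y. indicator {..<0} y * indicator {..<0} (- y)) = (\<lambda>y::real. 0 :: ennreal)"
    by (auto split: split_indicator)
  finally show ?thesis by simp
qed

lemma distr_uminus_reflected_neg_part:
  assumes sM[measurable_cong]: "sets M = sets borel"
  shows "distr (reflected_neg_part M) borel uminus = density M (indicator {..<0})"
proof -
  have "distr (reflected_neg_part M) borel uminus = distr (density M (indicator {..<0})) borel (uminus \<circ> uminus)"
    unfolding reflected_neg_part_def by (rule distr_distr) measurable
  also have "\<dots> = density M (indicator {..<0})"
    unfolding comp_def minus_minus by (rule distr_id2) (simp add: sM)
  finally show ?thesis .
qed

lemma eq_if_agree_on_nonneg_and_reflected_neg_parts_eq:
  assumes sM: "sets M = sets borel" and sN: "sets N = sets borel"
    and "agree_on_nonneg M N" and "reflected_neg_part M = reflected_neg_part N"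
  shows "M = N"
proof (rule measure_eqI)
  show "sets M = sets N" using sM sN by simp
  fix A assume "A \<in> sets M"
  then have A: "A \<in> sets borel" using sM by simp
  have split: "emeasure L A = emeasure L (A \<inter> {0..}) + emeasure (density L (indicator {..<0})) A"
    if "sets L = sets borel" for L :: "real measure"
  proof -
    have "emeasure (density L (indicator {..<0})) A = emeasure L (A \<inter> {..<0})"
      using that A by (simp add: emeasure_restricted Int_commute)
    moreover have "emeasure L (A \<inter> {0..}) + emeasure L (A \<inter> {..<0}) = emeasure L A"
      using that A by (subst plus_emeasure) (auto intro!: arg_cong[where f="emeasure L"])
    ultimately show ?thesis by simp
  qed
  have "emeasure M (A \<inter> {0..}) = emeasure N (A \<inter> {0..})"
    using assms(3) A unfolding agree_on_nonneg_def by auto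
  moreover have "density M (indicator {..<0}) = density N (indicator {..<0})"
    using assms(4) distr_uminus_reflected_neg_part[OF sM] distr_uminus_reflected_neg_part[OF sN] by metis
  ultimately show "emeasure M A = emeasure N A"
    using split[OF sM] split[OF sN] by simp
qed

lemma nn_integral_neg_part_shift:
  assumes "finite_measure M" and sM[measurable_cong]: "sets M = sets borel"
    and [measurable]: "f \<in> borel_measurable borel" "A \<in> sets borel" and A: "A \<subseteq> {0..}"
  shows "(\<integral>\<^sup>+y. indicator {..<0} y * (\<integral>\<^sup>+x. indicator {0..} x * indicator A (y + x) \<partial>density lborel f) \<partial>M)
    = (\<integral>\<^sup>+t. indicator A t * (\<integral>\<^sup>+s. ennreal (f (t + s)) \<partial>reflected_neg_part M) \<partial>lborel)"
proof -
  interpret M: finite_measure M by fact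
  interpret pair_sigma_finite lborel M by unfold_locales
  have shift: "indicator {..<0} y * (\<integral>\<^sup>+x. indicator {0..} x * indicator A (y + x) \<partial>density lborel f)
      = (\<integral>\<^sup>+t. indicator A t * (indicator {..<0} y * ennreal (f (t - y))) \<partial>lborel)" for y
  proof -
    have "(\<integral>\<^sup>+x. indicator {0..} x * indicator A (y + x) \<partial>density lborel f)
        = (\<integral>\<^sup>+x. ennreal (f x) * (indicator {0..} x * indicator A (y + x)) \<partial>lborel)"
      by (rule nn_integral_density) auto
    also have "\<dots> = (\<integral>\<^sup>+t. ennreal (f (t - y)) * (indicator {0..} (t - y) * indicator A t) \<partial>lborel)"
      by (subst nn_integral_real_affine[where c=1 and t="- y"]) auto
    finally show ?thesis
      using A by (auto simp: nn_integral_cmult[symmetric] intro!: nn_integral_cong split: split_indicator)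
  qed
  have "(\<integral>\<^sup>+y. indicator {..<0} y * (\<integral>\<^sup>+x. indicator {0..} x * indicator A (y + x) \<partial>density lborel f) \<partial>M)
      = (\<integral>\<^sup>+t. \<integral>\<^sup>+y. indicator A t * (indicator {..<0} y * ennreal (f (t - y))) \<partial>M \<partial>lborel)"
    unfolding shift by (rule Fubini') measurable
  also have "\<dots> = (\<integral>\<^sup>+t. indicator A t * (\<integral>\<^sup>+s. ennreal (f (t + s)) \<partial>reflected_neg_part M) \<partial>lborel)"
    by (simp add: nn_integral_reflected_neg_part[OF sM] nn_integral_cmult)
  finally show ?thesis .
qed

text \<open>On \<open>A \<subseteq> [0,\<infinity>)\<close>, write \<open>M = D\<^sup>+ + M\<^sup>-\<close> where \<open>D\<^sup>+\<close> is the part of \<open>density lborel f\<close> on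
  \<open>[0,\<infinity>)\<close>: the term \<open>M\<^sup>- \<star> M\<^sup>-\<close> vanishes, \<open>D\<^sup>+ \<star> D\<^sup>+\<close> does not depend on \<open>M\<^sup>-\<close>, and the two cross
  terms are equal.\<close>

lemma emeasure_convolution_self_nonneg:
  fixes f :: "real \<Rightarrow> real"
  defines "D \<equiv> density lborel f"
  assumes M: "finite_measure M" and sM[measurable_cong]: "sets M = sets borel"
    and "finite_measure D" and [measurable]: "f \<in> borel_measurable borel"
    and agree: "agree_on_nonneg M D"
    and [measurable]: "A \<in> sets borel" and A: "A \<subseteq> {0..}"
  shows "emeasure (M \<star> M) A =
    (\<integral>\<^sup>+x. indicator {0..} x * (\<integral>\<^sup>+y. indicator {0..} y * indicator A (x + y) \<partial>D) \<partial>D)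
    + 2 * (\<integral>\<^sup>+t. indicator A t * (\<integral>\<^sup>+s. ennreal (f (t + s)) \<partial>reflected_neg_part M) \<partial>lborel)"
proof -
  interpret M: finite_measure M by fact
  interpret D: finite_measure D by fact
  interpret pair_sigma_finite D M by unfold_locales
  have sD[measurable_cong]: "sets D = sets borel" by (simp add: D_def)
  define p where "p x = (\<integral>\<^sup>+y. indicator {0..} y * indicator A (x + y) \<partial>D)" for x
  define q where "q x = (\<integral>\<^sup>+y. indicator {..<0} y * indicator A (x + y) \<partial>M)" for x
  have [measurable]: "p \<in> borel_measurable borel" "q \<in> borel_measurable borel"
    unfolding p_def q_def by measurable
  have inner: "(\<integral>\<^sup>+y. indicator A (x + y) \<partial>M) = p x + q x" for x
  proof -
    have "(\<integral>\<^sup>+y. indicator A (x + y) \<partial>M) =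
        (\<integral>\<^sup>+y. indicator {0..} y * indicator A (x + y) + indicator {..<0} y * indicator A (x + y) \<partial>M)"
      by (intro nn_integral_cong) (auto split: split_indicator)
    also have "\<dots> = (\<integral>\<^sup>+y. indicator {0..} y * indicator A (x + y) \<partial>M) + q x"
      unfolding q_def by (rule nn_integral_add) auto
    finally show ?thesis
      unfolding p_def using agree_on_nonneg_nn_integral[OF sM sD agree] by simp
  qed
  have q_neg: "q x = 0" if "x < 0" for x
  proof -
    have "(\<lambda>y. indicator {..<0} y * indicator A (x + y)) = (\<lambda>y. 0 :: ennreal)"
      using A that by (force split: split_indicator)
    then show ?thesis unfolding q_def by simp
  qed
  have cross: "(\<integral>\<^sup>+x. indicator {0..} x * q x \<partial>M) = (\<integral>\<^sup>+y. indicator {..<0} y * p y \<partial>M)"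
  proof -
    have "(\<integral>\<^sup>+x. indicator {0..} x * q x \<partial>M) = (\<integral>\<^sup>+x. indicator {0..} x * q x \<partial>D)"
      by (rule agree_on_nonneg_nn_integral[OF sM sD agree]) measurable
    also have "\<dots> = (\<integral>\<^sup>+x. \<integral>\<^sup>+y. indicator {0..} x * indicator {..<0} y * indicator A (x + y) \<partial>M \<partial>D)"
      unfolding q_def by (simp add: nn_integral_cmult[symmetric] mult_ac)
    also have "\<dots> = (\<integral>\<^sup>+y. \<integral>\<^sup>+x. indicator {0..} x * indicator {..<0} y * indicator A (x + y) \<partial>D \<partial>M)"
      by (rule Fubini'[symmetric]) measurable
    also have "\<dots> = (\<integral>\<^sup>+y. indicator {..<0} y * p y \<partial>M)"
      unfolding p_def by (simp add: nn_integral_cmult[symmetric] mult_ac add.commute)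
    finally show ?thesis .
  qed
  have "emeasure (M \<star> M) A = (\<integral>\<^sup>+x. p x + q x \<partial>M)"
    using convolution_emeasure'[of A M M] M sM by (simp add: inner)
  also have "\<dots> = (\<integral>\<^sup>+x. indicator {0..} x * p x + (indicator {0..} x * q x + indicator {..<0} x * p x) \<partial>M)"
    using q_neg by (intro nn_integral_cong) (auto simp: distrib_left split: split_indicator)
  also have "\<dots> = (\<integral>\<^sup>+x. indicator {0..} x * p x \<partial>M) + (\<integral>\<^sup>+x. indicator {0..} x * q x \<partial>M)
      + (\<integral>\<^sup>+x. indicator {..<0} x * p x \<partial>M)"
    by (simp add: nn_integral_add add.assoc)
  also have "\<dots> = (\<integral>\<^sup>+x. indicator {0..} x * p x \<partial>D) + 2 * (\<integral>\<^sup>+y. indicator {..<0} y * p y \<partial>M)"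
    using agree_on_nonneg_nn_integral[OF sM sD agree, of p] by (simp add: cross mult_2 add.assoc)
  finally show ?thesis
    using nn_integral_neg_part_shift[OF M sM, of f A] A by (simp add: p_def D_def)
qed

lemma AE_eq_if_set_nn_integral_eq:
  fixes F G :: "real \<Rightarrow> ennreal"
  assumes [measurable]: "F \<in> borel_measurable borel" "G \<in> borel_measurable borel" "S \<in> sets borel"
    and eq: "\<And>A. A \<in> sets borel \<Longrightarrow> A \<subseteq> S \<Longrightarrow>
      (\<integral>\<^sup>+t. indicator A t * F t \<partial>lborel) = (\<integral>\<^sup>+t. indicator A t * G t \<partial>lborel)"
  shows "AE t in lborel. t \<in> S \<longrightarrow> F t = G t"
proof -
  have restrict: "(\<integral>\<^sup>+t. indicator S t * H t * indicator B t \<partial>lborel) =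
      (\<integral>\<^sup>+t. indicator (S \<inter> B) t * H t \<partial>lborel)" for H :: "real \<Rightarrow> ennreal" and B
    by (intro nn_integral_cong) (auto split: split_indicator)
  have "density lborel (\<lambda>t. indicator S t * F t) = density lborel (\<lambda>t. indicator S t * G t)"
    by (intro measure_eqI) (auto simp: emeasure_density restrict eq)
  then have "AE t in lborel. indicator S t * F t = indicator S t * G t"
    by (subst (asm) sigma_finite_measure.density_unique_iff[OF sigma_finite_lborel]) auto
  then show ?thesis
    by eventually_elim (auto split: split_indicator)
qed

lemma eq_if_agree_on_nonneg_and_convolution_self:
  fixes f :: "real \<Rightarrow> real"
  defines "D \<equiv> density lborel f"
  assumes k: "fact_moment_bound k C"
    and nonvanish: "\<And>a b. a < b \<Longrightarrow> \<not> (AE u in lborel. u \<in> {a<..<b} \<longrightarrow> k u = 0)"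
    and f_repr: "\<And>t. t \<ge> 0 \<Longrightarrow> complex_of_real (f t) = fourier_transform k t"
    and f[measurable]: "f \<in> borel_measurable borel" and f_nonneg: "\<And>t. f t \<ge> 0"
    and D: "finite_measure D"
    and M: "finite_measure M" and sM[measurable_cong]: "sets M = sets borel"
    and agree: "agree_on_nonneg M D" and agree_conv: "agree_on_nonneg (M \<star> M) (D \<star> D)"
  shows "M = D"
proof -
  have sD[measurable_cong]: "sets D = sets borel" by (simp add: D_def)
  define \<Psi> where "\<Psi> L t = (\<integral>\<^sup>+s. ennreal (f (t + s)) \<partial>reflected_neg_part L)" for L t
  have \<Psi>_measurable: "\<Psi> L \<in> borel_measurable borel" if "finite_measure L" "sets L = sets borel" for L
  proof -
    interpret finite_measure "reflected_neg_part L"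
      using finite_measure_reflected_neg_part[OF that] .
    show ?thesis unfolding \<Psi>_def by measurable
  qed
  note [measurable] = \<Psi>_measurable[OF M sM] \<Psi>_measurable[OF D sD]
  have "(\<integral>\<^sup>+t. indicator A t * \<Psi> M t \<partial>lborel) = (\<integral>\<^sup>+t. indicator A t * \<Psi> D t \<partial>lborel)"
    if [measurable]: "A \<in> sets borel" and A: "A \<subseteq> {0..}" for A
  proof -
    define K where "K = (\<integral>\<^sup>+x. indicator {0..} x * (\<integral>\<^sup>+y. indicator {0..} y * indicator A (x + y) \<partial>D) \<partial>D)"
    have "agree_on_nonneg D D" by (simp add: agree_on_nonneg_def)
    then have conv_D: "emeasure (D \<star> D) A = K + 2 * (\<integral>\<^sup>+t. indicator A t * \<Psi> D t \<partial>lborel)"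
      unfolding K_def \<Psi>_def D_def using D A
      by (intro emeasure_convolution_self_nonneg) (auto simp: D_def)
    have conv_M: "emeasure (M \<star> M) A = K + 2 * (\<integral>\<^sup>+t. indicator A t * \<Psi> M t \<partial>lborel)"
      unfolding K_def \<Psi>_def D_def using M sM D agree A
      by (intro emeasure_convolution_self_nonneg) (auto simp: D_def)
    have "emeasure (D \<star> D) A \<noteq> \<infinity>"
      using finite_measure.emeasure_finite[OF convolution_finite[OF D D sD sD]] by simp
    then have "K \<noteq> \<infinity>" using conv_D by (auto simp: top_unique)
    moreover have "emeasure (M \<star> M) A = emeasure (D \<star> D) A"
      using agree_conv A unfolding agree_on_nonneg_def by auto
    ultimately show ?thesis
      using conv_D conv_M by (simp add: ennreal_add_left_cancel ennreal_mult_cancel_left)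
  qed
  then have "AE t in lborel. t \<in> {0..} \<longrightarrow> \<Psi> M t = \<Psi> D t"
    by (intro AE_eq_if_set_nn_integral_eq) auto
  then have "AE t in lborel. t \<ge> 0 \<longrightarrow>
      (\<integral>s. f (t + s) \<partial>reflected_neg_part M) = (\<integral>s. f (t + s) \<partial>reflected_neg_part D)"
    by eventually_elim (simp add: \<Psi>_def integral_eq_nn_integral f_nonneg)
  then have "reflected_neg_part M = reflected_neg_part D"
    using M D sM sD
    by (intro finite_measure_eq_if_translate_integrals_eq[OF k nonvanish f_repr f])
      (auto intro: finite_measure_reflected_neg_part emeasure_reflected_neg_part_lessThan_0)
  then show ?thesis
    by (rule eq_if_agree_on_nonneg_and_reflected_neg_parts_eq[OF sM sD agree])
qed

lemma real_analytic_on_fourier_transform: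
  assumes "fact_moment_bound w C"
  shows "real_analytic_on (fourier_transform w) UNIV"
  unfolding real_analytic_on_def
proof (intro ballI exI conjI)
  fix x t :: real assume "t \<in> ball x 1"
  then show "(\<lambda>n. fourier_taylor_coeff w x n * complex_of_real ((t - x) ^ n)) sums fourier_transform w t"
    by (intro fourier_transform_sums[OF assms]) (simp add: dist_real_def abs_minus_commute)
qed simp

lemma conv_pow_1_2: "conv_pow M 1 = M" "conv_pow M 2 = (M \<star> M)"
  by (simp_all add: numeral_2_eq_2)

theorem theorem3p9:
  fixes \<mu> :: "real measure" and f :: "real \<Rightarrow> real" and k :: "real \<Rightarrow> complex"
  assumes prob: "real_prob \<mu>"
    and f_meas: "f \<in> borel_measurable borel"
    and f_nonneg: "\<And>t. f t \<ge> 0"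
    and dens: "\<mu> = density lborel f"
    and supp: "\<not> msupport \<mu> \<subseteq> {..<0}"
    and k_meas: "k \<in> borel_measurable borel"
    and f_repr: "\<And>t. t \<ge> 0 \<Longrightarrow>
        complex_of_real (f t) = (LINT u|lborel. exp (\<i> * complex_of_real (u * t)) * k u)"
    and moments: "\<And>n. integrable lborel (\<lambda>u. \<bar>u\<bar> ^ n * cmod (k u))"
    and limsup_mom: "limsup (\<lambda>n. ereal ((LINT u|lborel. \<bar>u\<bar> ^ n * cmod (k u)) / fact n)) < \<infinity>"
    and nonvanish: "\<And>a b. a < b \<Longrightarrow> \<not> (AE u in lborel. u \<in> {a<..<b} \<longrightarrow> k u = 0)"
  shows "(\<exists>B. \<forall>t\<ge>0. \<bar>f t\<bar> \<le> B)
    \<and> (\<forall>g :: real \<Rightarrow> real. set_integrable lborel {0..} g \<longrightarrow>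
          (\<forall>t\<ge>0. (LINT s:{0..}|lborel. f (t + s) * g s) = 0) \<longrightarrow>
          (AE s in lborel. s \<ge> 0 \<longrightarrow> g s = 0))
    \<and> (\<forall>\<mu>1. real_prob \<mu>1 \<and> agree_on_nonneg \<mu>1 \<mu> \<and> agree_on_nonneg (\<mu>1 \<star> \<mu>1) (\<mu> \<star> \<mu>)
           \<longrightarrow> \<mu>1 = \<mu>)
    \<and> \<mu> \<in> class_C
    \<and> real_analytic_on (\<lambda>t. LINT u|lborel. exp (\<i> * complex_of_real (u * t)) * k u) UNIV"
proof -
  obtain C where k: "fact_moment_bound k C"
    using fact_moment_bound_if_limsup[OF k_meas moments limsup_mom] by blast
  have f_repr': "\<And>t. t \<ge> 0 \<Longrightarrow> complex_of_real (f t) = fourier_transform k t"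
    using f_repr by (simp add: fourier_transform_def)
  have fin: "finite_measure (density lborel f)"
    using prob dens by (simp add: real_prob_def prob_space_def)
  have unique: "\<mu>1 = \<mu>" if "real_prob \<mu>1" "agree_on_nonneg \<mu>1 \<mu>" "agree_on_nonneg (\<mu>1 \<star> \<mu>1) (\<mu> \<star> \<mu>)" for \<mu>1
    using that eq_if_agree_on_nonneg_and_convolution_self[OF k nonvanish f_repr' f_meas f_nonneg fin] dens
    by (auto simp: real_prob_def prob_space_def)
  have "\<mu> \<in> class_C"
    unfolding class_C_def
  proof (intro CollectI conjI allI impI prob)
    fix \<mu>1 assume "real_prob \<mu>1 \<and> (\<forall>n\<ge>1. agree_on_nonneg (conv_pow \<mu>1 n) (conv_pow \<mu> n))"
    then show "\<mu>1 = \<mu>"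
      using unique[of \<mu>1] conv_pow_1_2 by (metis one_le_numeral order_refl)
  qed
  then show ?thesis
    using abs_le_if_fourier_repr[OF f_repr'] AE_eq_0_if_translate_integrals_eq_0[OF k nonvanish f_repr' f_meas]
      unique real_analytic_on_fourier_transform[OF k]
    unfolding fourier_transform_def[abs_def] by blast
qed

end
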